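(* Let $(M_1,\circ_1)$ and $(M_2,\circ_2)$ be fuzzy $\Gamma$-hypersemigroups and let $(M_i,\ast_i)$ be the associated $\Gamma$-hypersemigroups, given by $a\ast_i\gamma\ast_i b=\{x\in M_i:(a\circ_i\gamma\circ_i b)(x)>0\}$. If $f:M_1\to M_2$ is a homomorphism of fuzzy $\Gamma$-hypersemigroups, then $f$ is a homomorphism of the associated $\Gamma$-hypersemigroups, i.e. $f(a\ast_1\gamma\ast_1 b)\subseteq f(a)\ast_2\gamma\ast_2 f(b)$ for all $a,b\in M_1$, $\gamma\in\Gamma$.
   Context: $\Gamma$ is a nonempty set, common to both structures. A fuzzy subset of $M$ is a map $M\to[0,1]$; a fuzzy $\Gamma$-hyperoperation on $M$ assigns to each $(a,\gamma,b)\in M\times\Gamma\times M$ a fuzzy subset $a\circ\gamma\circ b$; for $a\in M$ and fuzzy $\mu\ne0$, $(a\circ\gamma\circ\mu)(r)=\bigvee_{t}((a\circ\gamma\circ t)(r)\wedge\mu(t))$ and $(\mu\circ\gamma\circ a)(r)=\bigvee_t(\mu(t)\wedge(t\circ\gamma\circ a)(r))$ (both $0$ if $\mu=0$). $(M,\circ)$ is a fuzzy $\Gamma$-hypersemigroup if $(a\circ\alpha\circ b)\circ\beta\circ c=a\circ\alpha\circ(b\circ\beta\circ c)$ for all $a,b,c,\alpha,\beta$. For a map $f:M_1\to M_2$ and fuzzy subset $\mu$ of $M_1$, $f(\mu)$ is the fuzzy subset of $M_2$ with $f(\mu)(t)=\bigvee_{r\in f^{-1}(t)}\mu(r)$ if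 $f^{-1}(t)\ne\emptyset$ and $0$ otherwise. For fuzzy sets $\mu_1\le\mu_2$ means $\mu_1(m)\le\mu_2(m)$ for all $m$. $f$ is a homomorphism of fuzzy $\Gamma$-hypersemigroups if $f(a\circ_1\gamma\circ_1 b)\le f(a)\circ_2\gamma\circ_2 f(b)$ for all $a,b\in M_1$, $\gamma\in\Gamma$. *)

theory Defs
  imports Complex_Main
begin

type_synonym 'm fuzzy = "'m \<Rightarrow> real"

definition is_fuzzy :: "'m fuzzy \<Rightarrow> bool" where
  "is_fuzzy \<mu> \<longleftrightarrow> (\<forall>x. 0 \<le> \<mu> x \<and> \<mu> x \<le> 1)"

type_synonym ('m,'g) fhop = "'m \<Rightarrow> 'g \<Rightarrow> 'm \<Rightarrow> 'm fuzzy"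

definition is_fuzzy_hop :: "('m,'g) fhop \<Rightarrow> bool" where
  "is_fuzzy_hop op \<longleftrightarrow> (\<forall>a g b. is_fuzzy (op a g b))"

definition elem_fuzzy :: "('m,'g) fhop \<Rightarrow> 'm \<Rightarrow> 'g \<Rightarrow> 'm fuzzy \<Rightarrow> 'm fuzzy" where
  "elem_fuzzy op a g \<mu> = (if \<mu> = (\<lambda>_. 0) then (\<lambda>_. 0)
     else (\<lambda>r. Sup ((\<lambda>t. min (op a g t r) (\<mu> t)) ` UNIV)))"

definition fuzzy_elem :: "('m,'g) fhop \<Rightarrow> 'm fuzzy \<Rightarrow> 'g \<Rightarrow> 'm \<Rightarrow> 'm fuzzy" where
  "fuzzy_elem op \<mu> g a = (if \<mu> = (\<lambda>_. 0) then (\<lambda>_. 0)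
     else (\<lambda>r. Sup ((\<lambda>t. min (\<mu> t) (op t g a r)) ` UNIV)))"

definition fuzzy_Gamma_hypersemigroup :: "('m,'g) fhop \<Rightarrow> bool" where
  "fuzzy_Gamma_hypersemigroup op \<longleftrightarrow> is_fuzzy_hop op \<and>
     (\<forall>a b c \<alpha> \<beta>. fuzzy_elem op (op a \<alpha> b) \<beta> c = elem_fuzzy op a \<alpha> (op b \<beta> c))"

definition fuzzy_image :: "('a \<Rightarrow> 'b) \<Rightarrow> 'a fuzzy \<Rightarrow> 'b fuzzy" where
  "fuzzy_image f \<mu> = (\<lambda>t. if f -` {t} \<noteq> {} then Sup (\<mu> ` (f -` {t})) else 0)"

definition fuzzy_hom :: "('a,'g) fhop \<Rightarrow> ('b,'g) fhop \<Rightarrow> ('a \<Rightarrow> 'b) \<Rightarrow> bool" where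
  "fuzzy_hom op1 op2 f \<longleftrightarrow> (\<forall>a b g. fuzzy_image f (op1 a g b) \<le> op2 (f a) g (f b))"

definition assoc_hop :: "('m,'g) fhop \<Rightarrow> 'm \<Rightarrow> 'g \<Rightarrow> 'm \<Rightarrow> 'm set" where
  "assoc_hop op a g b = {x. op a g b x > 0}"

end

theory Submission
  imports Defs
begin

text \<open>A point of positive membership in \<open>a \<circ>\<^sub>1 \<gamma> \<circ>\<^sub>1 b\<close> keeps positive membership in its image
  fuzzy set, which the homomorphism condition bounds by \<open>f a \<circ>\<^sub>2 \<gamma> \<circ>\<^sub>2 f b\<close>.\<close>

lemma fuzzy_image_ge:
  assumes "bdd_above (range \<mu>)"
  shows "\<mu> x \<le> fuzzy_image f \<mu> (f x)"
proof -
  have "bdd_above (\<mu> ` (f -` {f x}))"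
    using assms by (rule bdd_above_mono) auto
  then have "\<mu> x \<le> Sup (\<mu> ` (f -` {f x}))"
    by (rule cSUP_upper[rotated]) simp
  then show ?thesis
    by (auto simp: fuzzy_image_def)
qed

lemma bdd_above_range_fuzzy:
  assumes "is_fuzzy \<mu>"
  shows "bdd_above (range \<mu>)"
  using assms unfolding is_fuzzy_def by (intro bdd_aboveI[where M = 1]) auto

theorem theorem4p22:
  fixes op1 :: "('m1,'g) fhop" and op2 :: "('m2,'g) fhop" and f :: "'m1 \<Rightarrow> 'm2"
  assumes "fuzzy_Gamma_hypersemigroup op1"
    and "fuzzy_Gamma_hypersemigroup op2"
    and "fuzzy_hom op1 op2 f"
  shows "\<forall>a b \<gamma>. f ` assoc_hop op1 a \<gamma> b \<subseteq> assoc_hop op2 (f a) \<gamma> (f b)"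
proof (intro allI subsetI)
  fix a b \<gamma> y
  assume "y \<in> f ` assoc_hop op1 a \<gamma> b"
  then obtain x where y: "y = f x" and pos: "op1 a \<gamma> b x > 0"
    by (auto simp: assoc_hop_def)
  have "is_fuzzy (op1 a \<gamma> b)"
    using assms(1) by (simp add: fuzzy_Gamma_hypersemigroup_def is_fuzzy_hop_def)
  then have "op1 a \<gamma> b x \<le> fuzzy_image f (op1 a \<gamma> b) (f x)"
    by (intro fuzzy_image_ge bdd_above_range_fuzzy)
  also have "\<dots> \<le> op2 (f a) \<gamma> (f b) (f x)"
    using assms(3) by (simp add: fuzzy_hom_def le_fun_def)
  finally show "y \<in> assoc_hop op2 (f a) \<gamma> (f b)"
    using pos y by (simp add: assoc_hop_def)
qed

end
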